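(* For every state $x$, \[ \Psi_1(x) \le \Psi_0(x) + \sqrt{\Psi_0(x)\cdot\frac{n}{\bar s_h}} + \frac{n}{4}\left(\frac{1}{\bar s_h}-\frac{1}{\bar s_a}\right). \]
   Context: There are $n$ processors with speeds $s_i>0$, $\mathcal{S}=\sum_i s_i$, arithmetic mean $\bar s_a=\mathcal{S}/n$ and harmonic mean $\bar s_h=n/\sum_i (1/s_i)$. There are $m$ unit tasks; a state $x$ assigns each task to a processor and $w_i(x)$ is the number of tasks on processor $i$. $\Psi_0(x)=\sum_i (w_i(x)-m s_i/\mathcal{S})^2/s_i$ and $\Psi_1(x)=\sum_i \frac{w_i(x)(w_i(x)+1)}{s_i}-\frac{m^2}{\mathcal{S}}-\frac{mn}{\mathcal{S}}+\frac{n}{4}\left(\frac{1}{\bar s_h}-\frac{1}{\bar s_a}\right)$. *)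

theory Defs
  imports "HOL-Analysis.Analysis"
begin

definition Stot :: "nat \<Rightarrow> (nat \<Rightarrow> real) \<Rightarrow> real" where
  "Stot n s = (\<Sum>i<n. s i)"

definition mean_a :: "nat \<Rightarrow> (nat \<Rightarrow> real) \<Rightarrow> real" where
  "mean_a n s = Stot n s / real n"

definition mean_h :: "nat \<Rightarrow> (nat \<Rightarrow> real) \<Rightarrow> real" where
  "mean_h n s = real n / (\<Sum>i<n. 1 / s i)"

definition is_state :: "nat \<Rightarrow> nat \<Rightarrow> (nat \<Rightarrow> nat) \<Rightarrow> bool" where
  "is_state n m x \<longleftrightarrow> (\<forall>j<m. x j < n)"

definition load :: "nat \<Rightarrow> (nat \<Rightarrow> nat) \<Rightarrow> nat \<Rightarrow> nat" where
  "load m x i = card {j. j < m \<and> x j = i}"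

definition Psi0 :: "nat \<Rightarrow> (nat \<Rightarrow> real) \<Rightarrow> nat \<Rightarrow> (nat \<Rightarrow> nat) \<Rightarrow> real" where
  "Psi0 n s m x = (\<Sum>i<n. (real (load m x i) - real m * s i / Stot n s)^2 / s i)"

definition Psi1 :: "nat \<Rightarrow> (nat \<Rightarrow> real) \<Rightarrow> nat \<Rightarrow> (nat \<Rightarrow> nat) \<Rightarrow> real" where
  "Psi1 n s m x = (\<Sum>i<n. real (load m x i) * (real (load m x i) + 1) / s i)
     - (real m)^2 / Stot n s - real m * real n / Stot n s
     + real n / 4 * (1 / mean_h n s - 1 / mean_a n s)"

end

theory Submission
  imports Defs
begin

text \<open>Write \<open>d\<^sub>i = w\<^sub>i - m s\<^sub>i / \<S>\<close> for the deviation of processor \<open>i\<close> from its fair share.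
  Since \<open>\<Sum> d\<^sub>i = 0\<close>, expanding \<open>w\<^sub>i (w\<^sub>i + 1) = (d\<^sub>i + m s\<^sub>i/\<S>)\<^sup>2 + d\<^sub>i + m s\<^sub>i/\<S>\<close> shows that
  \<open>\<Psi>\<^sub>1 - \<Psi>\<^sub>0\<close> is the constant term plus the linear term \<open>\<Sum> d\<^sub>i / s\<^sub>i\<close>. By Cauchy-Schwarz
  with weights \<open>1/s\<^sub>i\<close>, that linear term is at most
  \<open>sqrt (\<Sum> d\<^sub>i\<^sup>2/s\<^sub>i \<cdot> \<Sum> 1/s\<^sub>i) = sqrt (\<Psi>\<^sub>0 \<cdot> n / s\<^sub>h)\<close>.\<close>

lemma sum_load_eq:
  assumes "is_state n m x"
  shows "(\<Sum>i<n. real (load m x i)) = real m"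
proof -
  have "x ` {..<m} \<subseteq> {..<n}" using assms by (auto simp: is_state_def)
  then have "(\<Sum>i<n. \<Sum>j\<in>{j\<in>{..<m}. x j = i}. 1) = (\<Sum>j<m. 1::nat)"
    by (intro sum.group) auto
  then show ?thesis by (simp add: load_def flip: of_nat_sum)
qed

lemma weighted_Cauchy_Schwarz:
  fixes d s :: "'a \<Rightarrow> real"
  assumes "\<And>i. i \<in> A \<Longrightarrow> s i > 0"
  shows "(\<Sum>i\<in>A. d i / s i)\<^sup>2 \<le> (\<Sum>i\<in>A. (d i)\<^sup>2 / s i) * (\<Sum>i\<in>A. 1 / s i)"
proof -
  let ?u = "\<lambda>i. d i / sqrt (s i)" and ?v = "\<lambda>i. 1 / sqrt (s i)"
  have "(\<Sum>i\<in>A. d i / s i) = (\<Sum>i\<in>A. ?u i * ?v i)"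
    "(\<Sum>i\<in>A. (d i)\<^sup>2 / s i) = (\<Sum>i\<in>A. (?u i)\<^sup>2)"
    "(\<Sum>i\<in>A. 1 / s i) = (\<Sum>i\<in>A. (?v i)\<^sup>2)"
    using assms by (auto intro!: sum.cong simp: power_divide real_sqrt_mult[symmetric] less_imp_le)
  then show ?thesis using Cauchy_Schwarz_ineq_sum[of ?u ?v A] by simp
qed

lemma sum_load_square_expansion:
  fixes w s :: "'a \<Rightarrow> real"
  assumes "finite A" and "\<And>i. i \<in> A \<Longrightarrow> s i \<noteq> 0"
    and S: "(\<Sum>i\<in>A. s i) = S" "S \<noteq> 0" and M: "(\<Sum>i\<in>A. w i) = M"
  shows "(\<Sum>i\<in>A. w i * (w i + 1) / s i)
    = (\<Sum>i\<in>A. (w i - M * s i / S)\<^sup>2 / s i) + (\<Sum>i\<in>A. (w i - M * s i / S) / s i)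
      + M\<^sup>2 / S + M * real (card A) / S"
proof -
  define d where "d i = w i - M * s i / S" for i
  have "(\<Sum>i\<in>A. d i) = M - M / S * (\<Sum>i\<in>A. s i)"
    by (simp add: d_def M sum_subtractf sum_distrib_left)
  then have dsum: "(\<Sum>i\<in>A. d i) = 0" using S by simp
  have "w i * (w i + 1) / s i
      = (d i)\<^sup>2 / s i + d i / s i + 2 * M / S * d i + M\<^sup>2 / S\<^sup>2 * s i + M / S" if "i \<in> A" for i
    using assms(2)[OF that] S(2) by (simp add: d_def field_simps power2_eq_square)
  then have "(\<Sum>i\<in>A. w i * (w i + 1) / s i)
      = (\<Sum>i\<in>A. (d i)\<^sup>2 / s i) + (\<Sum>i\<in>A. d i / s i) + 2 * M / S * (\<Sum>i\<in>A. d i)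
        + M\<^sup>2 / S\<^sup>2 * (\<Sum>i\<in>A. s i) + real (card A) * (M / S)"
    by (simp add: sum.distrib sum_distrib_left)
  then show ?thesis using dsum S by (simp add: d_def power2_eq_square)
qed

lemma Psi1_eq_Psi0_plus_linear:
  assumes "n \<ge> 1" and "\<And>i. i < n \<Longrightarrow> s i > 0" and "is_state n m x"
  shows "Psi1 n s m x = Psi0 n s m x + (\<Sum>i<n. (real (load m x i) - real m * s i / Stot n s) / s i)
           + real n / 4 * (1 / mean_h n s - 1 / mean_a n s)"
proof -
  have "Stot n s > 0"
    unfolding Stot_def using assms(1,2) by (intro sum_pos) (auto simp: lessThan_empty_iff)
  then show ?thesis
    using sum_load_square_expansion[of "{..<n}" s "Stot n s" "\<lambda>i. real (load m x i)" "real m"]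
      assms sum_load_eq
    by (force simp: Psi1_def Psi0_def Stot_def)
qed

theorem lemma26:
  fixes n m :: nat and s :: "nat \<Rightarrow> real" and x :: "nat \<Rightarrow> nat"
  assumes "n \<ge> 1"
    and "\<And>i. i < n \<Longrightarrow> s i > 0"
    and "is_state n m x"
  shows "Psi1 n s m x \<le> Psi0 n s m x + sqrt (Psi0 n s m x * (real n / mean_h n s))
           + real n / 4 * (1 / mean_h n s - 1 / mean_a n s)"
proof -
  define d where "d i = real (load m x i) - real m * s i / Stot n s" for i
  have "real n / mean_h n s = (\<Sum>i<n. 1 / s i)"
    using assms(1) by (simp add: mean_h_def)
  moreover have "(\<Sum>i<n. d i / s i)\<^sup>2 \<le> Psi0 n s m x * (\<Sum>i<n. 1 / s i)"
    using weighted_Cauchy_Schwarz[of "{..<n}" s d] assms(2) by (simp add: Psi0_def d_def)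
  then have "(\<Sum>i<n. d i / s i) \<le> sqrt (Psi0 n s m x * (\<Sum>i<n. 1 / s i))"
    using real_le_rsqrt by blast
  ultimately show ?thesis
    using Psi1_eq_Psi0_plus_linear[OF assms] by (simp add: d_def)
qed

end
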